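(* Let $\langle (x_n,y_n)\rangle_{n\in\mathbb{N}}$ be the solutions in $\mathbb{N}^2$ of $x^2-19\,y^2=1$, indexed so that $y_0<y_1<\cdots$ (so $39\mid y_k$ for every $k$). Let $n=2^m h$ with $m>0$ and $h$ odd. If $y_n/39$ is representable, then $y_h/39$ is representable.
   Context: $(x_0,y_0)=(1,0)$, $(x_1,y_1)=(170,39)$, $x_n+y_n\sqrt{19}=(170+39\sqrt{19})^n$. A non-negative integer $N$ is called representable if $N=w^2+w\,t+5\,t^2$ for some $w,t\in\mathbb{Z}$ (the norm form of the ring of integers $\mathbb{Z}[\tfrac{1+\sqrt{-19}}{2}]$). *)

theory Defs
  imports Main
begin

text \<open>x_n + y_n sqrt 19 = (170 + 39 sqrt 19)^n, written out as the
  multiplication recursion (x_0,y_0) = (1,0).\<close>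
fun pell19 :: "nat \<Rightarrow> int \<times> int" where
  "pell19 0 = (1, 0)"
| "pell19 (Suc n) = (let (x, y) = pell19 n in (170 * x + 19 * 39 * y, 39 * x + 170 * y))"

definition pell_x :: "nat \<Rightarrow> int" where "pell_x n = fst (pell19 n)"
definition pell_y :: "nat \<Rightarrow> int" where "pell_y n = snd (pell19 n)"

definition representable :: "int \<Rightarrow> bool" where
  "representable N \<longleftrightarrow> N \<ge> 0 \<and> (\<exists>w t :: int. N = w^2 + w * t + 5 * t^2)"

end

theory Submission
  imports Defs "HOL-Computational_Algebra.Primes" "HOL-Number_Theory.Cong"
begin

text \<open>Since y_(2k) = 2 x_k y_k and x_k is coprime to y_k, unwinding the doublings gives
  y_n = A y_h with A > 0 coprime to y_h, hence y_n/39 = A (y_h/39) with coprime factors.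
  The form w^2 + wt + 5t^2 is the norm form of a principal ideal domain (class number 1 for
  discriminant -19), so a coprime factor of a represented number is represented: a prime p
  dividing a norm either divides both coordinates, or it is itself a norm, and dividing by
  a suitable conjugate of that norm lowers the value by the factor p.\<close>

definition norm19 :: "int \<Rightarrow> int \<Rightarrow> int" where
  "norm19 w t = w^2 + w*t + 5*t^2"

lemma four_norm19: "4 * norm19 w t = (2*w + t)^2 + 19*t^2"
  by (simp add: norm19_def power2_eq_square algebra_simps)

lemma norm19_nonneg: "norm19 w t \<ge> 0"
proof -
  have "(2*w + t)^2 + 19*t^2 \<ge> 0" by simp
  thus ?thesis using four_norm19[of w t] by linarith
qed

lemma representable_iff_norm19: "representable N \<longleftrightarrow> (\<exists>w t. N = norm19 w t)"
  unfolding representable_def using norm19_nonneg unfolding norm19_def by metis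

lemma norm19_mult_sq: "norm19 (p*w) (p*t) = p^2 * norm19 w t"
  by (simp add: norm19_def power2_eq_square algebra_simps)

lemma even_norm19_iff: "even (norm19 w t) \<longleftrightarrow> even w \<and> even t"
  by (auto simp: norm19_def)

lemma reduced_form_disc_minus19:
  fixes a b c :: int
  assumes "-a \<le> b" "b < a" "a \<le> c" "b^2 - 4*a*c = -19"
  shows "a = 1 \<and> b = -1 \<and> c = 5"
proof -
  have "b^2 \<le> a^2" using assms(1,2) by (simp add: abs_le_square_iff[symmetric] abs_le_iff)
  moreover have "a*a \<le> a*c" using assms(1-3) by simp
  ultimately have "3*a^2 \<le> 19" using assms(4) by (simp add: power2_eq_square algebra_simps)
  have "a < 3"
  proof (rule ccontr)
    assume "\<not> a < 3"
    hence "3*3 \<le> a*a" using mult_mono[of 3 a 3 a] by simp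
    thus False using \<open>3*a^2 \<le> 19\<close> by (simp add: power2_eq_square)
  qed
  moreover have "a > 0" using assms(1,2) by simp
  moreover have "a \<noteq> 2"
  proof
    assume "a = 2"
    hence "b \<in> {-2,-1,0,1}" using assms(1,2) by auto
    thus False using assms(4) \<open>a = 2\<close> by (auto; presburger)
  qed
  ultimately have "a = 1" by simp
  hence "b \<in> {-1,0}" using assms(1,2) by auto
  thus ?thesis using assms(4) \<open>a = 1\<close> by (auto; presburger)
qed

text \<open>Gauss reduction: every positive definite form of discriminant -19 is equivalent to
  the principal form, so it only takes values of the norm form.\<close>
lemma disc_minus19_form_eq_norm19:
  fixes a b c X Y :: int
  assumes "a > 0" "b^2 - 4*a*c = -19"
  shows "\<exists>w t. a*X^2 + b*X*Y + c*Y^2 = norm19 w t"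
  using assms
proof (induction "nat a" arbitrary: a b c X Y rule: less_induct)
  case less
  define k where "k = (b + a) div (2*a)"
  define b' where "b' = b - 2*k*a"
  define c' where "c' = c - k*b' - k^2*a"
  define X' where "X' = X + k*Y"
  have "b + a = 2*a*k + (b + a) mod (2*a)" "0 \<le> (b + a) mod (2*a)" "(b + a) mod (2*a) < 2*a"
    using less.prems(1) unfolding k_def by simp_all
  hence "-a \<le> b'" "b' < a" unfolding b'_def by (auto simp: algebra_simps)
  have disc: "b'^2 - 4*a*c' = -19"
    using less.prems(2) unfolding c'_def b'_def by (simp add: algebra_simps power2_eq_square)
  have shift: "a*X^2 + b*X*Y + c*Y^2 = a*X'^2 + b'*X'*Y + c'*Y^2"
    unfolding X'_def c'_def b'_def by (simp add: algebra_simps power2_eq_square)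
  have "a * (4*c') = b'^2 + 19" using disc by (simp add: algebra_simps)
  hence "a * (4*c') > 0" by (simp add: add_nonneg_pos)
  hence "c' > 0" using less.prems(1) by (simp add: zero_less_mult_iff)
  show ?case
  proof (cases "a \<le> c'")
    case True
    with reduced_form_disc_minus19[OF \<open>-a \<le> b'\<close> \<open>b' < a\<close> _ disc]
    have "a*X'^2 + b'*X'*Y + c'*Y^2 = norm19 X' (-Y)" by (simp add: norm19_def)
    thus ?thesis using shift by metis
  next
    case False
    have "(-b')^2 - 4*c'*a = -19" using disc by (simp add: algebra_simps)
    then obtain w t where "c'*Y^2 + (-b')*Y*(-X') + a*(-X')^2 = norm19 w t"
      using less.hyps[of c'] False \<open>c' > 0\<close> by fastforce
    hence "a*X'^2 + b'*X'*Y + c'*Y^2 = norm19 w t" by (simp add: algebra_simps power2_eq_square)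
    thus ?thesis using shift by metis
  qed
qed

lemma odd_prime_dvd_sq_plus_19_eq_norm19:
  fixes p r :: int
  assumes p: "prime p" "odd p" and r: "p dvd r^2 + 19"
  shows "\<exists>a b. p = norm19 a b"
proof -
  obtain b where "odd b" "p dvd b^2 + 19"
  proof (cases "odd r")
    case True thus ?thesis using that r by blast
  next
    case False
    have "(r + p)^2 + 19 = (r^2 + 19) + p*(2*r + p)" by (simp add: power2_eq_square algebra_simps)
    hence "p dvd (r + p)^2 + 19" using r by (metis dvd_add dvd_triv_left)
    moreover have "odd (r + p)" using False p(2) by simp
    ultimately show ?thesis using that by blast
  qed
  moreover obtain k where "b = 2*k + 1" using \<open>odd b\<close> by (metis oddE)
  hence "4 dvd b^2 + 19" by (simp add: power2_eq_square algebra_simps)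
  moreover have "coprime 4 p"
    using p(2) coprime_mult_left_iff[of 2 2 p] by (simp add: coprime_commute)
  ultimately have "4*p dvd b^2 + 19" by (simp add: divides_mult)
  then obtain c where c: "b^2 + 19 = 4*p*c" by (metis dvd_def)
  have "p > 0" using p prime_gt_0_int by blast
  then obtain a t where "p*1^2 + b*1*0 + c*0^2 = norm19 a t"
    using disc_minus19_form_eq_norm19[of p b c 1 0] c by fastforce
  thus ?thesis by auto
qed

lemma prime_dvd_norm19_eq_norm19:
  fixes p :: int
  assumes p: "prime p" and d: "p dvd norm19 w t" and nd: "\<not> (p dvd w \<and> p dvd t)"
  shows "\<exists>a b. p = norm19 a b"
proof -
  have "\<not> p dvd t"
  proof
    assume "p dvd t"
    hence "p dvd w^2" using d unfolding norm19_def
      by (metis dvd_add_left_iff dvd_mult power2_eq_square)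
    thus False using nd \<open>p dvd t\<close> p prime_dvd_power by blast
  qed
  then obtain s where s: "[t * s = 1] (mod p)"
    using p by (metis cong_solve_coprime_int prime_imp_coprime coprime_commute)
  define r where "r = (2*w + t)*s"
  have "[4 * norm19 w t * s^2 = r^2 + 19 * (t*s)^2] (mod p)"
    unfolding four_norm19 r_def by (simp add: power2_eq_square algebra_simps)
  moreover have "[r^2 + 19 * (t*s)^2 = r^2 + 19 * 1^2] (mod p)"
    using s by (intro cong_add cong_mult cong_pow) auto
  moreover have "[4 * norm19 w t * s^2 = 0] (mod p)" using d by (simp add: cong_0_iff)
  ultimately have "p dvd r^2 + 19" by (metis cong_0_iff cong_sym cong_trans power_one mult_1_right)
  moreover have "odd p"
    using p nd d even_norm19_iff prime_odd_int[of p] prime_ge_2_int[of p]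
    by (metis order.order_iff_strict)
  ultimately show ?thesis using odd_prime_dvd_sq_plus_19_eq_norm19 p by blast
qed

text \<open>If p = N(a + b\<omega>) divides N(w + t\<omega>), then p divides the product of the two
  cross terms below, and the corresponding product N(a + b\<omega>)N(w + t\<omega>) (or the one
  with a conjugate) is divisible by p in both coordinates.\<close>
lemma prime_dvd_norm19_descent:
  fixes p :: int
  assumes p: "prime p" and d: "p dvd norm19 w t"
  shows "(\<exists>w' t'. norm19 w t = p * norm19 w' t') \<or> (\<exists>w' t'. norm19 w t = p^2 * norm19 w' t')"
proof (cases "p dvd w \<and> p dvd t")
  case True
  then show ?thesis by (metis dvdE norm19_mult_sq)
next
  case False
  obtain a b where ab: "p = norm19 a b" using prime_dvd_norm19_eq_norm19[OF p d False] by blast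
  have "(t*a - w*b)*(w*b + t*a + t*b) = t^2 * norm19 a b - b^2 * norm19 w t"
    by (simp add: norm19_def power2_eq_square algebra_simps)
  hence "p dvd (t*a - w*b) \<or> p dvd (w*b + t*a + t*b)"
    using ab d p by (metis dvd_diff dvd_mult dvd_refl prime_dvd_mult_iff)
  then obtain u v where uv: "p dvd v" "norm19 u v = p * norm19 w t"
  proof
    assume "p dvd (t*a - w*b)"
    moreover have "norm19 (w*a + w*b + 5*t*b) (t*a - w*b) = p * norm19 w t"
      using ab by (simp add: norm19_def power2_eq_square algebra_simps)
    ultimately show ?thesis using that by blast
  next
    assume "p dvd (w*b + t*a + t*b)"
    moreover have "norm19 (w*a - 5*t*b) (w*b + t*a + t*b) = p * norm19 w t"
      using ab by (simp add: norm19_def power2_eq_square algebra_simps)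
    ultimately show ?thesis using that by blast
  qed
  obtain v' where v': "v = p*v'" using uv(1) by blast
  have "norm19 u v = u^2 + p*(u*v' + 5*p*v'^2)"
    using v' by (simp add: norm19_def power2_eq_square algebra_simps)
  hence "p dvd u^2" using uv(2) by (metis dvd_add_left_iff dvd_triv_left)
  then obtain u' where u': "u = p*u'" using p prime_dvd_power by blast
  have "p * (p * norm19 u' v') = p * norm19 w t"
    using uv(2) u' v' norm19_mult_sq by (metis power2_eq_square mult.assoc)
  hence "norm19 w t = p * norm19 u' v'" using p by auto
  thus ?thesis by blast
qed

lemma coprime_factor_norm19:
  fixes A B :: int
  assumes "A > 0" "coprime A B" "\<exists>w t. A*B = norm19 w t"
  shows "\<exists>w t. B = norm19 w t"
  using assms
proof (induction "nat A" arbitrary: A rule: less_induct)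
  case less
  show ?case
  proof (cases "A = 1")
    case True thus ?thesis using less.prems by simp
  next
    case False
    then obtain p where p: "prime p" "p dvd A"
      using less.prems(1) prime_divisor_exists[of A] by auto
    obtain w t where wt: "A*B = norm19 w t" using less.prems(3) by blast
    have "p > 1" using p prime_gt_1_int by blast
    have smaller: "\<exists>w t. B = norm19 w t"
      if "A = q*A'" "q > 1" "A'*B = norm19 w' t'" for q A' w' t'
    proof -
      have "A' > 0" using that less.prems(1) by (simp add: zero_less_mult_iff)
      hence "nat A' < nat A" using that by simp
      moreover have "coprime A' B" using less.prems(2) that by simp
      ultimately show ?thesis using less.hyps \<open>A' > 0\<close> that(3) by blast
    qed
    have "p dvd norm19 w t" using wt p(2) by (metis dvd_mult2)
    from prime_dvd_norm19_descent[OF p(1) this] show ?thesis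
    proof (elim disjE exE)
      fix w' t' assume h: "norm19 w t = p * norm19 w' t'"
      obtain A' where A': "A = p*A'" using p(2) by blast
      then show ?thesis using smaller[OF A' \<open>p > 1\<close>, of w' t'] h wt \<open>p > 1\<close> by simp
    next
      fix w' t' assume h: "norm19 w t = p^2 * norm19 w' t'"
      have "\<not> p dvd B" using p less.prems(2) by (meson coprime_common_divisor not_prime_unit)
      hence "coprime (p^2) B" using p by (simp add: prime_imp_coprime)
      moreover have "p^2 dvd A*B" using h wt by simp
      ultimately obtain A' where A': "A = p^2*A'" using coprime_dvd_mult_left_iff by blast
      have "p^2 > 1" using \<open>p > 1\<close> by simp
      then show ?thesis using smaller[OF A' \<open>p^2 > 1\<close>, of w' t'] h wt \<open>p > 1\<close>
        by (simp add: A' mult.assoc)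
    qed
  qed
qed

lemma pell_x_0 [simp]: "pell_x 0 = 1" and pell_y_0 [simp]: "pell_y 0 = 0"
  by (simp_all add: pell_x_def pell_y_def)

lemma pell_x_Suc: "pell_x (Suc n) = 170 * pell_x n + 741 * pell_y n"
  and pell_y_Suc: "pell_y (Suc n) = 39 * pell_x n + 170 * pell_y n"
  by (simp_all add: pell_x_def pell_y_def split: prod.splits)

lemma pell_y_add: "pell_y (a + b) = pell_x a * pell_y b + pell_y a * pell_x b"
proof -
  have "pell_x (a + b) = pell_x a * pell_x b + 19 * pell_y a * pell_y b \<and>
    pell_y (a + b) = pell_x a * pell_y b + pell_y a * pell_x b"
    by (induction b) (simp_all add: pell_x_Suc pell_y_Suc algebra_simps)
  thus ?thesis by blast
qed

lemma pell_y_double: "pell_y (2*k) = 2 * pell_x k * pell_y k"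
  using pell_y_add[of k k] unfolding mult_2[of k] by (simp add: algebra_simps)

lemma pell_equation: "pell_x n ^ 2 - 19 * pell_y n ^ 2 = 1"
  by (induction n) (simp_all add: pell_x_Suc pell_y_Suc power2_eq_square algebra_simps)

lemma pell_x_pos: "pell_x n > 0"
proof -
  have "pell_x n \<ge> 1 \<and> pell_y n \<ge> 0"
    by (induction n) (simp_all add: pell_x_Suc pell_y_Suc)
  thus ?thesis by simp
qed

lemma dvd_pell_y: "39 dvd pell_y n"
  by (induction n) (simp_all add: pell_x_Suc pell_y_Suc)

lemma odd_pell_y_iff: "odd (pell_y n) \<longleftrightarrow> odd n"
proof -
  have "(odd (pell_y n) \<longleftrightarrow> odd n) \<and> (odd (pell_x n) \<longleftrightarrow> even n)"
    by (induction n) (simp_all add: pell_x_Suc pell_y_Suc)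
  thus ?thesis by blast
qed

lemma coprime_pell_x_pell_y: "coprime (pell_x n) (pell_y n)"
proof (rule coprimeI)
  fix c assume "c dvd pell_x n" "c dvd pell_y n"
  hence "c dvd pell_x n ^ 2 - 19 * pell_y n ^ 2" by (simp add: power2_eq_square)
  thus "is_unit c" using pell_equation[of n] by simp
qed

lemma pell_y_double_power_factor:
  assumes "odd h"
  shows "\<exists>A. A > 0 \<and> pell_y (2^i * h) = A * pell_y h \<and> coprime A (pell_y h)"
proof (induction i)
  case 0 show ?case by (intro exI[of _ 1]) simp
next
  case (Suc i)
  define j where "j = 2^i * h"
  obtain A where A: "A > 0" "pell_y j = A * pell_y h" "coprime A (pell_y h)"
    using Suc j_def by blast
  have "pell_y (2^Suc i * h) = (2 * pell_x j * A) * pell_y h"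
    using pell_y_double[of j] A(2) by (simp add: j_def mult.assoc)
  moreover have "coprime 2 (pell_y h)" using odd_pell_y_iff[of h] assms by simp
  moreover have "coprime (pell_x j) (pell_y h)"
    using A(2) coprime_divisors[OF dvd_refl _ coprime_pell_x_pell_y[of j]] by simp
  hence "coprime (2 * pell_x j * A) (pell_y h)"
    using \<open>coprime 2 (pell_y h)\<close> A(3) by (simp only: coprime_mult_left_iff)
  moreover have "2 * pell_x j * A > 0" using A(1) pell_x_pos[of j] by simp
  ultimately show ?case by blast
qed

theorem lemma3:
  fixes n m h :: nat
  assumes "n = 2 ^ m * h" and "m > 0" and "odd h"
    and "representable (pell_y n div 39)"
  shows "representable (pell_y h div 39)"
proof -
  obtain A where A: "A > 0" "pell_y n = A * pell_y h" "coprime A (pell_y h)"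
    using pell_y_double_power_factor[OF assms(3), of m] assms(1) by blast
  obtain B where B: "pell_y h = 39 * B" using dvd_pell_y[of h] by blast
  have "pell_y n div 39 = A * B" using A(2) B by simp
  moreover have "pell_y h div 39 = B" using B by simp
  moreover have "coprime A B" using A(3) B by simp
  ultimately show ?thesis
    using assms(4) coprime_factor_norm19[OF A(1)] by (simp add: representable_iff_norm19)
qed

end
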